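(* The quadratic vector equation $Mx=a+b(x,x)$ has at least one (nonnegative) solution if and only if Condition A1 holds. Moreover, if it has a solution, then it has a minimal solution.
   Context: Inequalities between vectors/matrices are componentwise. An M-matrix is a matrix $sI-P$ with $P\geq0$ entrywise and $s\geq\rho(P)$ ($\rho$ = spectral radius). Let $M\in\mathbb R^{n\times n}$ be a nonsingular M-matrix, $a\in\mathbb R^n$ with $a\geq 0$, and $b:\mathbb R^n\times\mathbb R^n\to\mathbb R^n$ a bilinear map (not necessarily symmetric) with $b(x,y)\geq 0$ whenever $x,y\geq 0$. A solution of the quadratic vector equation $Mx=a+b(x,x)$ means a vector $x\geq 0$ satisfying it; a solution $x_\ast$ is minimal if $x_\ast\leq y$ for every solution $y$. A linear map $l:\mathbb R^n\to\mathbb R^m$ is weakly positive if $l(x)\geq 0$ and $l(x)\neq 0$ whenever $x\geq 0$, $x\neq 0$. Condition A1: there exist a weakly positive linear map $l:\mathbb R^n\to\mathbb R^m$ (for some $m$) and a vector $z\in\mathbb R^m$, $z\geq 0$, such that for every $x\geq 0$, $l(x)\leq z$ implies $l\big(M^{-1}(a+b(x,x))\big)\leq z$. *)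

theory Defs
  imports "HOL-Analysis.Analysis"
begin

definition cplx_eigenvalues :: "real^'n^'n \<Rightarrow> complex set" where
  "cplx_eigenvalues P = {lam. \<exists>v :: complex^'n. v \<noteq> 0 \<and>
      (\<chi> i j. complex_of_real (P $ i $ j)) *v v = lam *s v}"

definition spec_radius :: "real^'n^'n \<Rightarrow> real" where
  "spec_radius P = Max (cmod ` cplx_eigenvalues P)"

definition M_matrix :: "real^'n^'n \<Rightarrow> bool" where
  "M_matrix M \<longleftrightarrow> (\<exists>s P. M = s *\<^sub>R mat 1 - P \<and> (\<forall>i j. P $ i $ j \<ge> 0) \<and> s \<ge> spec_radius P)"

definition nonsingular_M_matrix :: "real^'n^'n \<Rightarrow> bool" where
  "nonsingular_M_matrix M \<longleftrightarrow> M_matrix M \<and> invertible M"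

definition qve_solution :: "real^'n^'n \<Rightarrow> real^'n \<Rightarrow> (real^'n \<Rightarrow> real^'n \<Rightarrow> real^'n) \<Rightarrow> real^'n \<Rightarrow> bool" where
  "qve_solution M a b x \<longleftrightarrow> 0 \<le> x \<and> M *v x = a + b x x"

definition qve_minimal_solution :: "real^'n^'n \<Rightarrow> real^'n \<Rightarrow> (real^'n \<Rightarrow> real^'n \<Rightarrow> real^'n) \<Rightarrow> real^'n \<Rightarrow> bool" where
  "qve_minimal_solution M a b x \<longleftrightarrow> qve_solution M a b x \<and> (\<forall>y. qve_solution M a b y \<longrightarrow> x \<le> y)"

(* A linear map l : R^n \<rightarrow> R^m, with m arbitrary, is represented as a function
   real^'n \<Rightarrow> nat \<Rightarrow> real whose components 0..m-1 are relevant. *)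
definition weakly_positive :: "nat \<Rightarrow> (real^'n \<Rightarrow> nat \<Rightarrow> real) \<Rightarrow> bool" where
  "weakly_positive m l \<longleftrightarrow> (\<forall>i<m. linear (\<lambda>x. l x i)) \<and>
     (\<forall>x. 0 \<le> x \<and> x \<noteq> 0 \<longrightarrow> (\<forall>i<m. 0 \<le> l x i) \<and> (\<exists>i<m. l x i \<noteq> 0))"

definition condition_A1 :: "real^'n^'n \<Rightarrow> real^'n \<Rightarrow> (real^'n \<Rightarrow> real^'n \<Rightarrow> real^'n) \<Rightarrow> bool" where
  "condition_A1 M a b \<longleftrightarrow> (\<exists>m l z. weakly_positive m l \<and> (\<forall>i<m. 0 \<le> z i) \<and>
     (\<forall>x. 0 \<le> x \<longrightarrow> (\<forall>i<m. l x i \<le> z i) \<longrightarrow>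
          (\<forall>i<m. l (matrix_inv M *v (a + b x x)) i \<le> z i)))"

end

theory Submission
  imports Defs "HOL-Computational_Algebra.Polynomial"
begin

(*
  For x >= 0 the equation M x = a + b(x,x) is the fixed-point equation x = F x of
  F x = M^-1 (a + b(x,x)).  Since M^-1 is nonnegative, F is continuous and monotone on
  the nonnegative cone, so the iterates F^k 0 increase; when they are bounded they converge
  to the least nonnegative post-fixed point of F, which is a fixed point (monotone iteration,
  the first lemma).  A solution x_sol bounds the iterates, which yields the minimal
  solution, and gives Condition A1 with l = coordinate map, z = x_sol.  Conversely, under
  A1 the set {x >= 0. l x <= z} is F-invariant and, l being weakly positive, bounded.
*)

lemma monotone_iteration_fixpoint:
  fixes F :: "real^'n \<Rightarrow> real^'n"
  assumes cont: "\<And>x. isCont F x"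
    and mono: "\<And>x y. 0 \<le> x \<Longrightarrow> x \<le> y \<Longrightarrow> F x \<le> F y"
    and F0: "0 \<le> F 0"
    and bounded: "\<And>k. (F ^^ k) 0 \<le> u"
  shows "\<exists>x. 0 \<le> x \<and> F x = x \<and> (\<forall>y. 0 \<le> y \<longrightarrow> F y \<le> y \<longrightarrow> x \<le> y)"
proof -
  define X where "X k = (F ^^ k) 0" for k
  have X_Suc: "X (Suc k) = F (X k)" for k by (simp add: X_def)
  have incr: "0 \<le> X k \<and> X k \<le> X (Suc k)" for k
  proof (induction k)
    case 0 then show ?case using F0 by (simp add: X_def)
  next
    case (Suc k)
    then have "0 \<le> X (Suc k)" by (meson order_trans)
    moreover have "X (Suc k) \<le> X (Suc (Suc k))"
      using Suc mono by (simp add: X_Suc)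
    ultimately show ?case by simp
  qed
  define x where "x = (\<chi> i. SUP k. X k $ i)"
  have "(\<lambda>k. X k $ i) \<longlonglongrightarrow> x $ i" for i
  proof -
    have "incseq (\<lambda>k. X k $ i)"
      by (rule incseq_SucI) (use incr in \<open>auto simp: less_eq_vec_def\<close>)
    moreover have "bdd_above (range (\<lambda>k. X k $ i))"
      using bounded by (auto simp: X_def less_eq_vec_def intro!: bdd_aboveI[where M="u $ i"])
    ultimately show ?thesis unfolding x_def by (simp add: LIMSEQ_incseq_SUP)
  qed
  then have conv: "X \<longlonglongrightarrow> x" by (rule vec_tendstoI)
  have "(\<lambda>k. F (X k)) \<longlonglongrightarrow> F x" using cont conv isCont_tendsto_compose by blast
  moreover have "(\<lambda>k. F (X k)) \<longlonglongrightarrow> x" unfolding X_Suc[symmetric]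
    using conv by (rule LIMSEQ_Suc)
  ultimately have fixpoint: "F x = x" using LIMSEQ_unique by blast
  have nonneg: "0 \<le> x"
    using incr by (auto intro!: Lim_component_ge_cart[OF conv] simp: less_eq_vec_def)
  have least: "x \<le> y" if "0 \<le> y" "F y \<le> y" for y
  proof -
    have "X k \<le> y" for k
    proof (induction k)
      case 0 then show ?case using that by (simp add: X_def)
    next
      case (Suc k) then show ?case using mono[of "X k" y] incr that by (simp add: X_Suc)
    qed
    then show ?thesis
      by (auto intro!: Lim_component_le_cart[OF conv] simp: less_eq_vec_def)
  qed
  show ?thesis using fixpoint nonneg least by blast
qed

lemma invertible_iff_trivial_kernel:
  fixes A :: "'a::field^'n^'n"
  shows "invertible A \<longleftrightarrow> (\<forall>x. A *v x = 0 \<longrightarrow> x = 0)"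
  using invertible_left_inverse matrix_left_invertible_ker by blast

lemma matrix_inv_cancel:
  fixes A :: "real^'n^'n"
  assumes "invertible A"
  shows "matrix_inv A *v (A *v x) = x" and "A *v (matrix_inv A *v x) = x"
proof -
  have "A ** matrix_inv A = mat 1 \<and> matrix_inv A ** A = mat 1"
    using assms unfolding invertible_def matrix_inv_def by (rule someI_ex)
  then show "matrix_inv A *v (A *v x) = x" and "A *v (matrix_inv A *v x) = x"
    by (simp_all add: matrix_vector_mul_assoc)
qed

lemma shifted_matrix_vector_mult:
  "((t::real) *\<^sub>R mat 1 - P) *v (x::real^'n) = t *\<^sub>R x - P *v x"
proof -
  have "((t *\<^sub>R mat 1) *v x) $ i = t * x $ i" for i
    by (simp add: matrix_vector_mult_def mat_def mult.assoc sum_distrib_left[symmetric]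
        if_distrib[of "\<lambda>x. x * y" for y] cong: if_cong)
  then show ?thesis by (simp add: matrix_vector_mult_diff_rdistrib vec_eq_iff)
qed

lemma cone_preserving_mono:
  fixes R :: "real^'n^'n"
  assumes "\<And>y. 0 \<le> y \<Longrightarrow> 0 \<le> R *v y" and "x \<le> y"
  shows "R *v x \<le> R *v y"
proof -
  have "0 \<le> R *v (y - x)" using assms by simp
  then show ?thesis by (simp add: matrix_vector_mult_diff_distrib)
qed

lemma nonneg_matrix_cone_preserving:
  fixes P :: "real^'n^'n"
  assumes "\<forall>i j. 0 \<le> P $ i $ j" and "0 \<le> x"
  shows "0 \<le> P *v x"
  using assms unfolding less_eq_vec_def matrix_vector_mult_def by (auto intro!: sum_nonneg)

text \<open>The characteristic polynomial: det (\<lambda> I - A) is a polynomial in \<lambda> whose coefficient of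
  \<lambda>^n is 1 (only the identity permutation contributes to it), in particular it is nonzero.\<close>

lemma characteristic_polynomial_exists:
  fixes A :: "complex^'n^'n"
  shows "\<exists>q. q \<noteq> 0 \<and> (\<forall>l. poly q l = det (mat l - A))"
proof -
  define n where "n = CARD('n)"
  define f where "f p i = [: - A$i$p i, if i = p i then 1 else 0 :]" for p :: "'n \<Rightarrow> 'n" and i
  define q where "q = (\<Sum>p\<in>{p. p permutes (UNIV::'n set)}. smult (of_int (sign p)) (\<Prod>i\<in>UNIV. f p i))"
  have poly_q: "poly q l = det (mat l - A)" for l
    unfolding q_def det_def poly_sum poly_smult poly_prod
    by (intro sum.cong refl arg_cong2[where f="(*)"] prod.cong) (auto simp: f_def mat_def)
  have coeff_id: "coeff (\<Prod>i\<in>UNIV. f id i) n = 1"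
  proof -
    have "degree (\<Prod>i\<in>UNIV. f id i) = (\<Sum>i\<in>(UNIV::'n set). degree (f id i))"
      by (rule degree_prod_eq_sum_degree) (auto simp: f_def)
    also have "\<dots> = n" by (simp add: f_def n_def)
    finally have "degree (\<Prod>i\<in>UNIV. f id i) = n" .
    moreover have "lead_coeff (\<Prod>i\<in>UNIV. f id i) = 1"
      by (simp add: lead_coeff_prod f_def)
    ultimately show ?thesis by simp
  qed
  have coeff_other: "coeff (\<Prod>i\<in>UNIV. f p i) n = 0" if p_not_id: "p \<noteq> id" for p
  proof -
    obtain j where j: "p j \<noteq> j" using p_not_id by (auto simp: fun_eq_iff)
    have "degree (\<Prod>i\<in>UNIV. f p i) \<le> (\<Sum>i\<in>UNIV. (degree \<circ> f p) i)"
      by (rule degree_prod_sum_le) simp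
    also have "\<dots> = (\<Sum>i\<in>UNIV. if i = p i then 1 else 0)"
      by (intro sum.cong) (auto simp: f_def)
    also have "\<dots> = card {i. i = p i}" by (simp add: sum.If_cases)
    also have "\<dots> < n" unfolding n_def
      by (rule psubset_card_mono) (use j in \<open>auto simp: set_eq_iff\<close>)
    finally show ?thesis by (simp add: coeff_eq_0)
  qed
  have "coeff q n = (\<Sum>p\<in>{p. p permutes (UNIV::'n set)}. of_int (sign p) * coeff (\<Prod>i\<in>UNIV. f p i) n)"
    by (simp add: q_def coeff_sum)
  also have "\<dots> = (\<Sum>p\<in>{p. p permutes (UNIV::'n set)}. if p = id then 1 else 0)"
    by (intro sum.cong refl) (auto simp: coeff_id coeff_other)
  also have "\<dots> = 1" by (simp add: sum.delta' permutes_id)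
  finally have "q \<noteq> 0" by auto
  then show ?thesis using poly_q by blast
qed

text \<open>Every complex eigenvalue of P is a root of the characteristic polynomial, so there
  are finitely many and the spectral radius (a Max over them) bounds each of them.\<close>

lemma finite_cplx_eigenvalues: "finite (cplx_eigenvalues (P::real^'n^'n))"
proof -
  define A where "A = (\<chi> i j. complex_of_real (P $ i $ j))"
  obtain q where q: "q \<noteq> 0" "\<And>l. poly q l = det (mat l - A)"
    using characteristic_polynomial_exists by blast
  have "cplx_eigenvalues P \<subseteq> {l. poly q l = 0}"
  proof
    fix l assume "l \<in> cplx_eigenvalues P"
    then obtain v where v: "v \<noteq> 0" "A *v v = l *s v" by (auto simp: cplx_eigenvalues_def A_def)
    have "mat l *v v = l *s v"
      by (auto simp: vec_eq_iff matrix_vector_mult_def mat_def if_distrib[of "\<lambda>x. x * y" for y] cong: if_cong)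
    then have "(mat l - A) *v v = 0"
      using v by (simp add: matrix_vector_mult_diff_rdistrib)
    then have "\<not> invertible (mat l - A)" using v invertible_iff_trivial_kernel by blast
    then show "l \<in> {l. poly q l = 0}" by (simp add: q(2) invertible_det_nz)
  qed
  then show ?thesis using poly_roots_finite[OF q(1)] finite_subset by blast
qed

text \<open>A real kernel vector of t I - P is a real eigenvector of P for the eigenvalue t,
  so t I - P is invertible as soon as t exceeds the spectral radius.\<close>

lemma invertible_above_spec_radius:
  fixes P :: "real^'n^'n"
  assumes "t > spec_radius P"
  shows "invertible (t *\<^sub>R mat 1 - P)"
proof (rule ccontr)
  assume "\<not> invertible (t *\<^sub>R mat 1 - P)"
  then obtain x where x: "x \<noteq> 0" "(t *\<^sub>R mat 1 - P) *v x = 0"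
    using invertible_iff_trivial_kernel by blast
  then have Px: "P *v x = t *\<^sub>R x" by (simp add: shifted_matrix_vector_mult)
  define w where "w = (\<chi> i. complex_of_real (x $ i))"
  have "w \<noteq> 0" using x(1) by (auto simp: w_def vec_eq_iff)
  moreover have "(\<chi> i j. complex_of_real (P $ i $ j)) *v w = complex_of_real t *s w"
  proof -
    have "(\<Sum>j\<in>UNIV. complex_of_real (P $ i $ j) * complex_of_real (x $ j))
            = complex_of_real (t * x $ i)" for i
    proof -
      have "(\<Sum>j\<in>UNIV. P $ i $ j * x $ j) = t * x $ i"
        using arg_cong[OF Px, of "\<lambda>v. v $ i"] by (simp add: matrix_vector_mult_def)
      then have "complex_of_real (\<Sum>j\<in>UNIV. P $ i $ j * x $ j) = complex_of_real (t * x $ i)"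
        by simp
      then show ?thesis by (simp add: of_real_sum)
    qed
    then show ?thesis by (simp add: vec_eq_iff matrix_vector_mult_def w_def)
  qed
  ultimately have "complex_of_real t \<in> cplx_eigenvalues P" unfolding cplx_eigenvalues_def by blast
  then have "cmod (complex_of_real t) \<le> spec_radius P"
    unfolding spec_radius_def by (rule Max_ge[OF finite_imageI[OF finite_cplx_eigenvalues] imageI])
  then show False using assms by simp
qed

definition inverse_nonneg :: "real^'n^'n \<Rightarrow> bool" where
  "inverse_nonneg A \<longleftrightarrow> invertible A \<and> (\<forall>y. 0 \<le> y \<longrightarrow> 0 \<le> matrix_inv A *v y)"

lemma inverse_nonnegI:
  fixes A :: "real^'n^'n"
  assumes inv: "invertible A" and solvable: "\<And>y. 0 \<le> y \<Longrightarrow> \<exists>x. 0 \<le> x \<and> A *v x = y"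
  shows "inverse_nonneg A"
  unfolding inverse_nonneg_def
proof (intro conjI allI impI inv)
  fix y :: "real^'n" assume "0 \<le> y"
  then obtain x where "0 \<le> x" "A *v x = y" using solvable by blast
  then show "0 \<le> matrix_inv A *v y" using matrix_inv_cancel(1)[OF inv, of x] by simp
qed

lemma coordinate_sum_nonneg_matrix:
  fixes P :: "real^'n^'n"
  assumes P_nonneg: "\<forall>i j. 0 \<le> P $ i $ j" and x_nonneg: "0 \<le> x"
  shows "(\<Sum>i\<in>UNIV. (P *v x) $ i) \<le> (\<Sum>i\<in>UNIV. \<Sum>j\<in>UNIV. P $ i $ j) * (\<Sum>i\<in>UNIV. x $ i)"
proof -
  have component_le_sum: "x $ j \<le> (\<Sum>i\<in>UNIV. x $ i)" for j
    using x_nonneg by (intro member_le_sum) (auto simp: less_eq_vec_def)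
  have "(\<Sum>i\<in>UNIV. (P *v x) $ i) = (\<Sum>i\<in>UNIV. \<Sum>j\<in>UNIV. P $ i $ j * x $ j)"
    by (simp add: matrix_vector_mult_def)
  also have "\<dots> \<le> (\<Sum>i\<in>UNIV. \<Sum>j\<in>UNIV. P $ i $ j * (\<Sum>i\<in>UNIV. x $ i))"
    using P_nonneg component_le_sum by (intro sum_mono mult_left_mono) auto
  also have "\<dots> = (\<Sum>i\<in>UNIV. \<Sum>j\<in>UNIV. P $ i $ j) * (\<Sum>i\<in>UNIV. x $ i)"
    by (simp add: sum_distrib_right)
  finally show ?thesis .
qed

text \<open>Base case: for t beyond the total entry sum c of P \<ge> 0, the iteration
  x \<mapsto> (P x + y)/t keeps the coordinate sum below that of y, so monotone iteration
  produces a nonnegative solution of (t I - P) x = y.\<close>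

lemma inverse_nonneg_large_shift:
  fixes P :: "real^'n^'n"
  assumes P_nonneg: "\<forall>i j. 0 \<le> P $ i $ j"
    and t: "t \<ge> (\<Sum>i\<in>UNIV. \<Sum>j\<in>UNIV. P $ i $ j) + 1"
    and inv: "invertible (t *\<^sub>R mat 1 - P)"
  shows "inverse_nonneg (t *\<^sub>R mat 1 - P)"
proof (rule inverse_nonnegI[OF inv])
  fix y :: "real^'n" assume y_nonneg: "0 \<le> y"
  define c where "c = (\<Sum>i\<in>UNIV. \<Sum>j\<in>UNIV. P $ i $ j)"
  have c_nonneg: "0 \<le> c" unfolding c_def using P_nonneg by (simp add: sum_nonneg)
  have t_pos: "t > 0" using t c_nonneg c_def by linarith
  define S where "S x = (\<Sum>i\<in>UNIV. (x::real^'n) $ i)" for x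
  define F where "F x = (1/t) *\<^sub>R (P *v x + y)" for x
  have component_le_S: "x $ j \<le> S x" if "0 \<le> x" for x j
    unfolding S_def using that by (intro member_le_sum) (auto simp: less_eq_vec_def)
  have S_P: "S (P *v x) \<le> c * S x" if "0 \<le> x" for x
    unfolding S_def c_def by (rule coordinate_sum_nonneg_matrix[OF P_nonneg that])
  have F_nonneg: "0 \<le> F x" if "0 \<le> x" for x
    using nonneg_matrix_cone_preserving[OF P_nonneg that] y_nonneg t_pos
    unfolding F_def by (simp add: less_eq_vec_def)
  have S_y: "0 \<le> S y" using y_nonneg unfolding S_def by (simp add: sum_nonneg less_eq_vec_def)
  have invariant: "0 \<le> (F ^^ k) 0 \<and> S ((F ^^ k) 0) \<le> S y" for k
  proof (induction k)
    case 0 then show ?case using S_y by (simp add: S_def)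
  next
    case (Suc k)
    define x where "x = (F ^^ k) 0"
    have x: "0 \<le> x" "S x \<le> S y" using Suc by (auto simp: x_def)
    have "S (P *v x) + S y \<le> c * S y + S y"
      using S_P[OF x(1)] mult_left_mono[OF x(2) c_nonneg] by linarith
    also have "\<dots> \<le> t * S y" using t S_y unfolding c_def[symmetric]
      by (metis add.commute distrib_right mult.commute mult_1 mult_right_mono)
    finally have "S (F x) \<le> S y"
      using t_pos by (simp add: F_def S_def sum.distrib sum_divide_distrib[symmetric] divide_le_eq mult.commute)
    then show ?case using F_nonneg[OF x(1)] by (simp add: x_def)
  qed
  have bounded: "(F ^^ k) 0 \<le> (\<chi> j. S y)" for k
    using invariant[of k] component_le_S[of "(F ^^ k) 0"] by (auto simp: less_eq_vec_def intro: order_trans)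
  have mono: "F x \<le> F x'" if "0 \<le> x" "x \<le> x'" for x x'
  proof -
    have "P *v x \<le> P *v x'"
      using cone_preserving_mono[OF nonneg_matrix_cone_preserving[OF P_nonneg] that(2)] .
    then show ?thesis using t_pos unfolding F_def by (auto simp: less_eq_vec_def intro!: divide_right_mono)
  qed
  have cont: "isCont F x" for x
    unfolding F_def by (intro continuous_intros bounded_linear.isCont[OF matrix_vector_mul_bounded_linear])
  obtain x where x: "0 \<le> x" "F x = x"
    using monotone_iteration_fixpoint[OF cont mono F_nonneg[of 0] bounded] by auto
  have "t *\<^sub>R x = P *v x + y"
    using x(2) t_pos unfolding F_def by (metis divide_inverse_commute mult_1 right_inverse scaleR_one scaleR_scaleR less_irrefl)
  then show "\<exists>x. 0 \<le> x \<and> (t *\<^sub>R mat 1 - P) *v x = y"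
    using x(1) by (auto simp: shifted_matrix_vector_mult)
qed

lemma resolvent_perturbation:
  fixes P :: "real^'n^'n"
  assumes inv0: "invertible (t0 *\<^sub>R mat 1 - P)"
    and K_pos: "K > 0" and K: "\<And>z. norm (matrix_inv (t0 *\<^sub>R mat 1 - P) *v z) \<le> norm z * K"
    and small: "\<bar>t - t0\<bar> * K \<le> 1/2"
    and sol: "(t *\<^sub>R mat 1 - P) *v x = y"
  shows "norm (x - matrix_inv (t0 *\<^sub>R mat 1 - P) *v y) \<le> 2 * \<bar>t - t0\<bar> * K\<^sup>2 * norm y"
proof -
  define R0 where "R0 = matrix_inv (t0 *\<^sub>R mat 1 - P)"
  define e where "e = t - t0"
  have "(t0 *\<^sub>R mat 1 - P) *v x = y - e *\<^sub>R x"
    using sol unfolding shifted_matrix_vector_mult e_def by (simp add: algebra_simps)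
  then have x_eq: "x = R0 *v y - e *\<^sub>R (R0 *v x)"
    using matrix_inv_cancel(1)[OF inv0, of x]
    by (simp add: R0_def matrix_vector_mult_diff_distrib matrix_vector_mult_scaleR)
  have "norm (x - R0 *v y) = \<bar>e\<bar> * norm (R0 *v x)"
    by (subst x_eq) simp
  also have "\<dots> \<le> \<bar>e\<bar> * (norm x * K)"
    using K[of x] by (simp add: R0_def mult_left_mono)
  finally have dist: "norm (x - R0 *v y) \<le> \<bar>e\<bar> * K * norm x" by (simp add: ac_simps)
  have "norm x \<le> norm (R0 *v y) + norm (x - R0 *v y)"
    by (rule norm_triangle_sub)
  also have "\<dots> \<le> norm y * K + norm x / 2"
    using K[of y] dist mult_right_mono[OF small[folded e_def] norm_ge_zero[of x]]
    by (simp add: R0_def)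
  finally have "norm x \<le> 2 * (norm y * K)" by linarith
  then have "\<bar>e\<bar> * K * norm x \<le> \<bar>e\<bar> * K * (2 * (norm y * K))"
    using K_pos by (intro mult_left_mono) auto
  then show ?thesis using dist by (simp add: R0_def e_def power2_eq_square ac_simps)
qed

lemma nonneg_if_lower_bounds_vanish:
  fixes r C d :: real
  assumes "0 < d" and "\<And>e. 0 < e \<Longrightarrow> e < d \<Longrightarrow> - (C * e) \<le> r"
  shows "0 \<le> r"
proof -
  have "((\<lambda>e. - (C * e)) \<longlongrightarrow> - (C * 0)) (at_right 0)"
    by (intro tendsto_intros)
  moreover have "eventually (\<lambda>e. - (C * e) \<le> r) (at_right (0::real))"
    using assms unfolding eventually_at_right_field by blast
  ultimately have "- (C * 0) \<le> r"
    using tendsto_le[OF trivial_limit_at_right_real tendsto_const] by blast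
  then show ?thesis by simp
qed

text \<open>Closedness: if all u > t0 give an inverse-nonnegative u I - P and t0 I - P is
  invertible, then by continuity of the resolvent t0 I - P is inverse-nonnegative too.\<close>

lemma inverse_nonneg_closed:
  fixes P :: "real^'n^'n"
  assumes inv0: "invertible (t0 *\<^sub>R mat 1 - P)"
    and above: "\<And>u. u > t0 \<Longrightarrow> inverse_nonneg (u *\<^sub>R mat 1 - P)"
  shows "inverse_nonneg (t0 *\<^sub>R mat 1 - P)"
  unfolding inverse_nonneg_def
proof (intro conjI allI impI inv0)
  fix y :: "real^'n" assume y_nonneg: "0 \<le> y"
  define R0 where "R0 = matrix_inv (t0 *\<^sub>R mat 1 - P)"
  obtain K where K: "K > 0" "\<And>z. norm (R0 *v z) \<le> norm z * K"
    using bounded_linear.pos_bounded[OF matrix_vector_mul_bounded_linear[of R0]] by blast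
  have "0 \<le> (R0 *v y) $ i" for i
  proof (rule nonneg_if_lower_bounds_vanish)
    show "0 < 1 / (2 * K)" using K by simp
    fix e :: real assume e: "0 < e" "e < 1 / (2 * K)"
    define x where "x = matrix_inv ((t0 + e) *\<^sub>R mat 1 - P) *v y"
    have nonneg: "inverse_nonneg ((t0 + e) *\<^sub>R mat 1 - P)" using above e by simp
    then have x_nonneg: "0 \<le> x" using y_nonneg by (simp add: inverse_nonneg_def x_def)
    have "((t0 + e) *\<^sub>R mat 1 - P) *v x = y"
      using nonneg by (simp add: inverse_nonneg_def x_def matrix_inv_cancel(2))
    moreover have "\<bar>t0 + e - t0\<bar> * K \<le> 1/2" using e K by (simp add: field_simps)
    ultimately have "norm (x - R0 *v y) \<le> 2 * \<bar>t0 + e - t0\<bar> * K\<^sup>2 * norm y"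
      unfolding R0_def by (rule resolvent_perturbation[OF inv0 K(1) K(2)[unfolded R0_def], rotated])
    then have "norm (x - R0 *v y) \<le> 2 * e * K\<^sup>2 * norm y" using e by simp
    moreover have "x $ i - (R0 *v y) $ i \<le> norm (x - R0 *v y)"
      using component_le_norm_cart[of "x - R0 *v y" i] by simp
    moreover have "0 \<le> x $ i" using x_nonneg by (simp add: less_eq_vec_def)
    ultimately show "- (2 * K\<^sup>2 * norm y * e) \<le> (R0 *v y) $ i" by (simp add: ac_simps)
  qed
  then show "0 \<le> matrix_inv (t0 *\<^sub>R mat 1 - P) *v y" by (simp add: R0_def less_eq_vec_def)
qed

text \<open>For a cone-preserving matrix R of norm at most K and 0 \<le> e \<le> 1/(2K), the affine
  equation x = R (y + e x) has a nonnegative solution for every y \<ge> 0: monotone iteration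
  from 0 stays in the ball of radius 2 K |y|.\<close>

lemma cone_preserving_perturbed_solution:
  fixes R :: "real^'n^'n"
  assumes R_nonneg: "\<And>z. 0 \<le> z \<Longrightarrow> 0 \<le> R *v z"
    and K: "K > 0" "\<And>z. norm (R *v z) \<le> norm z * K"
    and e: "0 \<le> e" "e * K \<le> 1/2"
    and y_nonneg: "0 \<le> y"
  shows "\<exists>x. 0 \<le> x \<and> R *v (y + e *\<^sub>R x) = x"
proof -
  define F where "F x = R *v (y + e *\<^sub>R x)" for x
  have mono: "F x \<le> F x'" if "0 \<le> x" "x \<le> x'" for x x'
    unfolding F_def by (rule cone_preserving_mono[OF R_nonneg])
      (use that e in \<open>auto simp: less_eq_vec_def intro: mult_left_mono\<close>)
  have F0: "0 \<le> F 0" using R_nonneg y_nonneg by (simp add: F_def)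
  have cont: "isCont F x" for x
    unfolding F_def by (intro continuous_intros bounded_linear.isCont[OF matrix_vector_mul_bounded_linear])
  have norm_bound: "norm ((F ^^ k) 0) \<le> 2 * K * norm y" for k
  proof (induction k)
    case 0 then show ?case using K by simp
  next
    case (Suc k)
    define x where "x = (F ^^ k) 0"
    have "norm (F x) \<le> (norm y + e * norm x) * K"
      unfolding F_def using K e norm_triangle_ineq[of y "e *\<^sub>R x"]
      by (intro order_trans[OF K(2)] mult_right_mono) auto
    also have "\<dots> = norm y * K + (e * K) * norm x" by (simp add: algebra_simps)
    also have "\<dots> \<le> norm y * K + (1/2) * (2 * K * norm y)"
      using mult_mono[OF e(2) Suc[folded x_def]] K by simp
    finally show ?case by (simp add: x_def algebra_simps)
  qed
  have bounded: "(F ^^ k) 0 \<le> (\<chi> j. 2 * K * norm y)" for k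
    using norm_bound[of k] component_le_norm_cart[of "(F ^^ k) 0"]
    by (auto simp: less_eq_vec_def abs_le_iff intro: order_trans)
  show ?thesis
    using monotone_iteration_fixpoint[OF cont mono F0 bounded] by (auto simp: F_def)
qed

text \<open>For t = t0 - e the equation
  (t I - P) x = y reads x = (t0 I - P)^-1 (y + e x), solved by the previous lemma.\<close>

lemma inverse_nonneg_extends_down:
  fixes P :: "real^'n^'n"
  assumes nonneg0: "inverse_nonneg (t0 *\<^sub>R mat 1 - P)"
  shows "\<exists>\<delta>>0. \<forall>t. t0 - \<delta> < t \<longrightarrow> t \<le> t0 \<longrightarrow> invertible (t *\<^sub>R mat 1 - P) \<longrightarrow>
            inverse_nonneg (t *\<^sub>R mat 1 - P)"
proof -
  define R0 where "R0 = matrix_inv (t0 *\<^sub>R mat 1 - P)"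
  have inv0: "invertible (t0 *\<^sub>R mat 1 - P)" using nonneg0 by (simp add: inverse_nonneg_def)
  have R0_nonneg: "0 \<le> R0 *v y" if "0 \<le> y" for y
    using nonneg0 that by (simp add: inverse_nonneg_def R0_def)
  obtain K where K: "K > 0" "\<And>z. norm (R0 *v z) \<le> norm z * K"
    using bounded_linear.pos_bounded[OF matrix_vector_mul_bounded_linear[of R0]] by blast
  show ?thesis
  proof (intro exI[of _ "1/(2*K)"] conjI allI impI)
    show "1/(2*K) > 0" using K by simp
    fix t assume t: "t0 - 1/(2*K) < t" "t \<le> t0" and inv: "invertible (t *\<^sub>R mat 1 - P)"
    show "inverse_nonneg (t *\<^sub>R mat 1 - P)"
    proof (rule inverse_nonnegI[OF inv])
      fix y :: "real^'n" assume y_nonneg: "0 \<le> y"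
      define e where "e = t0 - t"
      have e: "0 \<le> e" "e * K \<le> 1/2" using t K by (auto simp: e_def field_simps)
      obtain x where x: "0 \<le> x" "R0 *v (y + e *\<^sub>R x) = x"
        using cone_preserving_perturbed_solution[OF R0_nonneg K e y_nonneg] by blast
      have "(t0 *\<^sub>R mat 1 - P) *v x = y + e *\<^sub>R x"
        using matrix_inv_cancel(2)[OF inv0, of "y + e *\<^sub>R x"] x(2) by (simp add: R0_def)
      then have "(t *\<^sub>R mat 1 - P) *v x = y"
        unfolding shifted_matrix_vector_mult e_def by (simp add: algebra_simps scaleR_diff_left)
      then show "\<exists>x. 0 \<le> x \<and> (t *\<^sub>R mat 1 - P) *v x = y" using x(1) by blast
    qed
  qed
qed

text \<open>Let T be the set of
  t \<ge> s such that u I - P is inverse-nonnegative for all u \<ge> t.  T is nonempty (large t),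
  its infimum belongs to T by closedness, and by downward extension the infimum can only
  be s itself.\<close>

lemma inverse_nonneg_shift:
  fixes P :: "real^'n^'n"
  assumes P_nonneg: "\<forall>i j. 0 \<le> P $ i $ j" and s: "spec_radius P \<le> s"
    and inv_s: "invertible (s *\<^sub>R mat 1 - P)"
  shows "inverse_nonneg (s *\<^sub>R mat 1 - P)"
proof -
  have inv: "invertible (t *\<^sub>R mat 1 - P)" if "s \<le> t" for t
    using that s inv_s invertible_above_spec_radius[of P t] by (cases "t = s") auto
  define T where "T = {t. s \<le> t \<and> (\<forall>u\<ge>t. inverse_nonneg (u *\<^sub>R mat 1 - P))}"
  define c where "c = (\<Sum>i\<in>UNIV. \<Sum>j\<in>UNIV. P $ i $ j)"
  have "max s (c + 1) \<in> T"
    unfolding T_def using inv by (auto intro!: inverse_nonneg_large_shift[OF P_nonneg] simp: c_def)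
  then have T_nonempty: "T \<noteq> {}" by auto
  have T_bdd: "bdd_below T" unfolding T_def by (auto intro: bdd_belowI[of _ s])
  define ts where "ts = Inf T"
  have s_le_ts: "s \<le> ts" unfolding ts_def by (rule cInf_greatest[OF T_nonempty]) (auto simp: T_def)
  have above: "inverse_nonneg (u *\<^sub>R mat 1 - P)" if u_gt: "u > ts" for u
  proof -
    obtain t where "t \<in> T" "t < u" using cInf_less_iff[OF T_nonempty T_bdd] u_gt ts_def by auto
    then show ?thesis by (auto simp: T_def)
  qed
  have at_ts: "inverse_nonneg (ts *\<^sub>R mat 1 - P)"
    using inverse_nonneg_closed[OF inv[OF s_le_ts] above] .
  have "ts = s"
  proof (rule ccontr)
    assume "ts \<noteq> s"
    then have s_less: "s < ts" using s_le_ts by simp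
    obtain \<delta> where \<delta>: "\<delta> > 0" "\<forall>t. ts - \<delta> < t \<longrightarrow> t \<le> ts \<longrightarrow> invertible (t *\<^sub>R mat 1 - P) \<longrightarrow>
        inverse_nonneg (t *\<^sub>R mat 1 - P)"
      using inverse_nonneg_extends_down[OF at_ts] by blast
    define t' where "t' = max s (ts - \<delta>/2)"
    have "t' \<in> T" unfolding T_def
    proof (intro CollectI conjI allI impI)
      show "s \<le> t'" by (simp add: t'_def)
      fix u assume "t' \<le> u"
      then show "inverse_nonneg (u *\<^sub>R mat 1 - P)"
        using \<delta> inv[of u] above[of u] by (cases "u \<le> ts") (auto simp: t'_def)
    qed
    then have "ts \<le> t'" unfolding ts_def by (rule cInf_lower[OF _ T_bdd])
    moreover have "t' < ts" using s_less \<delta> by (simp add: t'_def)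
    ultimately show False by simp
  qed
  then show ?thesis using at_ts by simp
qed

corollary nonsingular_M_matrix_inverse_nonneg:
  fixes M :: "real^'n^'n"
  assumes "nonsingular_M_matrix M"
  shows "inverse_nonneg M"
proof -
  obtain s P where "M = s *\<^sub>R mat 1 - P" "\<forall>i j. 0 \<le> P $ i $ j" "spec_radius P \<le> s"
    and "invertible M"
    using assms unfolding nonsingular_M_matrix_def M_matrix_def by blast
  then show ?thesis using inverse_nonneg_shift by blast
qed

lemma linear_functional_expansion:
  assumes "linear (f :: real^'n \<Rightarrow> real)"
  shows "f x = (\<Sum>k\<in>UNIV. x $ k * f (axis k 1))"
proof -
  interpret linear f by fact
  have "f x = f (\<Sum>k\<in>UNIV. x $ k *\<^sub>R axis k 1)"
    using basis_expansion[of x] by (simp add: scalar_mult_eq_scaleR)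
  also have "\<dots> = (\<Sum>k\<in>UNIV. x $ k * f (axis k 1))" by (simp add: sum scale)
  finally show ?thesis .
qed

text \<open>Weak positivity makes the sublevel set {x \<ge> 0. l x \<le> z} bounded: each unit vector
  e_j has some coordinate l(e_j)_i > 0, and l(x)_i \<ge> x_j l(e_j)_i for x \<ge> 0.\<close>

lemma weakly_positive_bounded_sublevel:
  fixes l :: "real^'n \<Rightarrow> nat \<Rightarrow> real"
  assumes wp: "weakly_positive m l"
  shows "\<exists>u. \<forall>x. 0 \<le> x \<longrightarrow> (\<forall>i<m. l x i \<le> z i) \<longrightarrow> x \<le> u"
proof -
  have unit_nonneg: "0 \<le> (axis j 1 :: real^'n) \<and> (axis j 1 :: real^'n) \<noteq> 0" for j
  proof
    show "0 \<le> (axis j 1 :: real^'n)" by (simp add: less_eq_vec_def axis_def)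
    show "(axis j 1 :: real^'n) \<noteq> 0" by (simp add: axis_eq_0_iff)
  qed
  have "\<exists>i. i < m \<and> 0 < l (axis j 1) i" for j
  proof -
    obtain i where "i < m" "l (axis j 1) i \<noteq> 0" "0 \<le> l (axis j 1) i"
      using wp unit_nonneg[of j] unfolding weakly_positive_def by blast
    then show ?thesis by auto
  qed
  then obtain \<iota> where \<iota>: "\<And>j. \<iota> j < m \<and> 0 < l (axis j 1) (\<iota> j)"
    by (metis someI_ex)
  define u where "u = (\<chi> j. z (\<iota> j) / l (axis j 1) (\<iota> j))"
  have "x \<le> u" if x_nonneg: "0 \<le> x" and below: "\<forall>i<m. l x i \<le> z i" for x
    unfolding less_eq_vec_def
  proof
    fix j
    define i where "i = \<iota> j"
    have i: "i < m" "0 < l (axis j 1) i" using \<iota>[of j] by (auto simp: i_def)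
    have "0 \<le> l (axis k 1) i" for k using wp i(1) unit_nonneg[of k] unfolding weakly_positive_def by blast
    then have "x $ j * l (axis j 1) i \<le> (\<Sum>k\<in>UNIV. x $ k * l (axis k 1) i)"
      using x_nonneg by (intro member_le_sum) (auto simp: less_eq_vec_def)
    also have "\<dots> = l x i"
      using wp i(1) linear_functional_expansion[of "\<lambda>x. l x i" x] by (simp add: weakly_positive_def)
    also have "\<dots> \<le> z i" using below i(1) by simp
    finally show "x $ j \<le> u $ j" using i(2) by (simp add: u_def i_def pos_le_divide_eq)
  qed
  then show ?thesis by blast
qed

lemma coordinate_map_weakly_positive:
  "\<exists>m (l :: real^'n \<Rightarrow> nat \<Rightarrow> real). weakly_positive m l \<and> (\<forall>x y. x \<le> y \<longleftrightarrow> (\<forall>i<m. l x i \<le> l y i))"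
proof -
  define m where "m = CARD('n)"
  obtain g where "bij_betw g {0..<m} (UNIV::'n set)"
    using ex_bij_betw_nat_finite[of "UNIV::'n set"] by (auto simp: m_def)
  then have g_onto: "\<exists>i<m. g i = j" for j unfolding bij_betw_def by (metis atLeastLessThan_iff imageE UNIV_I)
  define l where "l x i = x $ g i" for x :: "real^'n" and i
  have "weakly_positive m l"
    unfolding weakly_positive_def
  proof (intro conjI allI impI)
    fix i show "linear (\<lambda>x. l x i)" unfolding l_def
      using bounded_linear_vec_nth bounded_linear.linear by blast
  next
    fix x :: "real^'n" and i assume "0 \<le> x \<and> x \<noteq> 0" "i < m"
    then show "0 \<le> l x i" by (auto simp: l_def less_eq_vec_def)
  next
    fix x :: "real^'n" assume "0 \<le> x \<and> x \<noteq> 0"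
    then obtain j where "x $ j \<noteq> 0" by (auto simp: vec_eq_iff)
    then show "\<exists>i<m. l x i \<noteq> 0" using g_onto[of j] by (auto simp: l_def)
  qed
  moreover have "x \<le> y \<longleftrightarrow> (\<forall>i<m. l x i \<le> l y i)" for x y :: "real^'n"
  proof
    assume "x \<le> y" then show "\<forall>i<m. l x i \<le> l y i" by (simp add: l_def less_eq_vec_def)
  next
    assume "\<forall>i<m. l x i \<le> l y i"
    then show "x \<le> y" unfolding less_eq_vec_def l_def using g_onto by metis
  qed
  ultimately show ?thesis by blast
qed

locale quadratic_vector_equation =
  fixes M :: "real^'n^'n" and a :: "real^'n" and b :: "real^'n \<Rightarrow> real^'n \<Rightarrow> real^'n"
  assumes M: "nonsingular_M_matrix M"
    and a_nonneg: "0 \<le> a"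
    and bilinear: "bilinear b"
    and b_nonneg: "\<And>x y. 0 \<le> x \<Longrightarrow> 0 \<le> y \<Longrightarrow> 0 \<le> b x y"
begin

definition qve_map :: "real^'n \<Rightarrow> real^'n" where
  "qve_map x = matrix_inv M *v (a + b x x)"

lemma M_inverse_nonneg: "0 \<le> y \<Longrightarrow> 0 \<le> matrix_inv M *v y"
  using nonsingular_M_matrix_inverse_nonneg[OF M] by (simp add: inverse_nonneg_def)

lemma solution_iff_fixpoint: "qve_solution M a b x \<longleftrightarrow> 0 \<le> x \<and> qve_map x = x"
proof -
  have inv: "invertible M" using M by (simp add: nonsingular_M_matrix_def)
  show ?thesis
  proof
    assume "qve_solution M a b x"
    then show "0 \<le> x \<and> qve_map x = x"
      using matrix_inv_cancel(1)[OF inv, of x] by (auto simp: qve_solution_def qve_map_def)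
  next
    assume "0 \<le> x \<and> qve_map x = x"
    then show "qve_solution M a b x"
      using matrix_inv_cancel(2)[OF inv, of "a + b x x"] by (auto simp: qve_solution_def qve_map_def)
  qed
qed

lemma qve_map_nonneg: "0 \<le> x \<Longrightarrow> 0 \<le> qve_map x"
  unfolding qve_map_def using a_nonneg b_nonneg by (simp add: M_inverse_nonneg add_nonneg_nonneg)

text \<open>Monotonicity on the cone: b(y,y) - b(x,x) = b(y-x, y) + b(x, y-x) \<ge> 0.\<close>

lemma qve_map_mono:
  assumes "0 \<le> x" "x \<le> y"
  shows "qve_map x \<le> qve_map y"
proof -
  have "b y y - b x x = b (y - x) y + b x (y - x)"
    using bilinear by (simp add: bilinear_lsub bilinear_rsub)
  moreover have "0 \<le> b (y - x) y"
    using assms by (intro b_nonneg) (auto simp: less_eq_vec_def intro: order_trans)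
  moreover have "0 \<le> b x (y - x)"
    using assms by (intro b_nonneg) (auto simp: less_eq_vec_def)
  ultimately have "0 \<le> b y y - b x x" by simp
  then have "a + b x x \<le> a + b y y" by (simp add: less_eq_vec_def)
  then show ?thesis unfolding qve_map_def using cone_preserving_mono[OF M_inverse_nonneg] by blast
qed

lemma qve_map_continuous: "isCont qve_map x"
proof -
  have "isCont (\<lambda>x. b x x) x"
    using bilinear_continuous_compose[of "at x" "\<lambda>x. x" "\<lambda>x. x" b] bilinear
    by (simp add: continuous_ident)
  then have "isCont (\<lambda>x. a + b x x) x" using continuous_add[OF continuous_const] by blast
  then show ?thesis unfolding qve_map_def
    by (rule bounded_linear.isCont[OF matrix_vector_mul_bounded_linear])
qed

lemma minimal_solution_if_bounded_iterates:
  assumes "\<And>k. (qve_map ^^ k) 0 \<le> u"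
  shows "\<exists>x. qve_minimal_solution M a b x"
proof -
  obtain x where "0 \<le> x" "qve_map x = x" "\<forall>y. 0 \<le> y \<longrightarrow> qve_map y \<le> y \<longrightarrow> x \<le> y"
    using monotone_iteration_fixpoint[OF qve_map_continuous qve_map_mono qve_map_nonneg[of 0] assms]
    by auto
  then show ?thesis unfolding qve_minimal_solution_def solution_iff_fixpoint by auto
qed

lemma iterates_below_solution:
  assumes "qve_solution M a b y"
  shows "(qve_map ^^ k) 0 \<le> y"
proof (induction k)
  case 0 then show ?case using assms by (simp add: qve_solution_def)
next
  case (Suc k)
  have "0 \<le> (qve_map ^^ k) 0" by (induction k) (auto simp: qve_map_nonneg)
  then show ?case using qve_map_mono[OF _ Suc] assms by (simp add: solution_iff_fixpoint)
qed

text \<open>A solution x_sol gives Condition A1 with l the coordinate map and z = l x_sol,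
  since x \<le> x_sol implies F x \<le> F x_sol = x_sol.\<close>

lemma condition_A1_if_solution:
  assumes sol: "qve_solution M a b x_sol"
  shows "condition_A1 M a b"
proof -
  obtain m and l :: "real^'n \<Rightarrow> nat \<Rightarrow> real" where wp: "weakly_positive m l" and order: "\<forall>x y. x \<le> y \<longleftrightarrow> (\<forall>i<m. l x i \<le> l y i)"
    using coordinate_map_weakly_positive by blast
  have fix_star: "0 \<le> x_sol" "qve_map x_sol = x_sol" using sol solution_iff_fixpoint by auto
  have "l 0 i = 0" if "i < m" for i
    using wp that linear_0[of "\<lambda>x. l x i"] by (simp add: weakly_positive_def)
  moreover have "\<forall>i<m. l 0 i \<le> l x_sol i"
    using order fix_star(1) by blast
  ultimately have "\<forall>i<m. 0 \<le> l x_sol i" by simp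
  moreover have "\<forall>i<m. l (matrix_inv M *v (a + b x x)) i \<le> l x_sol i"
    if "0 \<le> x" "\<forall>i<m. l x i \<le> l x_sol i" for x
    using qve_map_mono[of x "x_sol"] that order fix_star(2) by (simp add: qve_map_def)
  ultimately show ?thesis unfolding condition_A1_def using wp by blast
qed

text \<open>Under Condition A1 the sublevel set {x \<ge> 0. l x \<le> z} contains 0, is invariant
  under the map and is bounded, so the iterates from 0 are bounded.\<close>

lemma bounded_iterates_if_condition_A1:
  assumes "condition_A1 M a b"
  shows "\<exists>u. \<forall>k. (qve_map ^^ k) 0 \<le> u"
proof -
  obtain m l z where wp: "weakly_positive m l" and z_nonneg: "\<forall>i<m. 0 \<le> z i"
    and invariant: "\<forall>x. 0 \<le> x \<longrightarrow> (\<forall>i<m. l x i \<le> z i) \<longrightarrow> (\<forall>i<m. l (qve_map x) i \<le> z i)"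
    using assms unfolding condition_A1_def qve_map_def by blast
  obtain u where u: "\<forall>x. 0 \<le> x \<longrightarrow> (\<forall>i<m. l x i \<le> z i) \<longrightarrow> x \<le> u"
    using weakly_positive_bounded_sublevel[OF wp] by blast
  have "0 \<le> (qve_map ^^ k) 0 \<and> (\<forall>i<m. l ((qve_map ^^ k) 0) i \<le> z i)" for k
  proof (induction k)
    case 0
    have "l 0 i = 0" if "i < m" for i
      using wp that linear_0[of "\<lambda>x. l x i"] by (simp add: weakly_positive_def)
    then show ?case using z_nonneg by simp
  next
    case (Suc k)
    then show ?case using invariant qve_map_nonneg by simp
  qed
  then show ?thesis using u by blast
qed

end

theorem mainTheorem4:
  fixes M :: "real^'n^'n" and a :: "real^'n" and b :: "real^'n \<Rightarrow> real^'n \<Rightarrow> real^'n"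
  assumes "nonsingular_M_matrix M"
    and "0 \<le> a"
    and "bilinear b"
    and "\<And>x y. 0 \<le> x \<Longrightarrow> 0 \<le> y \<Longrightarrow> 0 \<le> b x y"
  shows "((\<exists>x. qve_solution M a b x) \<longleftrightarrow> condition_A1 M a b)
     \<and> ((\<exists>x. qve_solution M a b x) \<longrightarrow> (\<exists>x. qve_minimal_solution M a b x))"
proof -
  interpret quadratic_vector_equation M a b
    using assms by unfold_locales
  have minimal: "\<exists>x. qve_minimal_solution M a b x" if "qve_solution M a b y" for y
    using minimal_solution_if_bounded_iterates iterates_below_solution[OF that] by blast
  have "\<exists>x. qve_solution M a b x" if "condition_A1 M a b"
    using bounded_iterates_if_condition_A1[OF that] minimal_solution_if_bounded_iterates
    unfolding qve_minimal_solution_def by blast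
  then show ?thesis using condition_A1_if_solution minimal by blast
qed

end
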